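(* Let $R$ be a $*$-ring with unity and let $a,b$ be central elements of $R$ generating the same ideal, i.e. $Ra=Rb$. Then the posets $(a]=\{x\in R: x\leq a\}$ and $(b]=\{x\in R: x\leq b\}$, ordered by the natural partial order, are order isomorphic.
   Context: The natural partial order on a $*$-ring $R$ with unity: $a\leq b$ iff there is $x\in R$ with $a=xa=xb=ax^*=bx^*$. *)

theory Defs
  imports Main
begin

definition star_ring :: "('a::ring_1 \<Rightarrow> 'a) \<Rightarrow> bool" where
  "star_ring st \<longleftrightarrow>
     (\<forall>x y. st (x + y) = st x + st y) \<and>
     (\<forall>x y. st (x * y) = st y * st x) \<and>
     (\<forall>x. st (st x) = x)"

definition nat_le :: "('a::ring_1 \<Rightarrow> 'a) \<Rightarrow> 'a \<Rightarrow> 'a \<Rightarrow> bool" where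
  "nat_le st a b \<longleftrightarrow>
     (\<exists>x. a = x * a \<and> a = x * b \<and> a = a * st x \<and> a = b * st x)"

definition down_set :: "('a::ring_1 \<Rightarrow> 'a) \<Rightarrow> 'a \<Rightarrow> 'a set" where
  "down_set st a = {x. nat_le st x a}"

definition central :: "'a::ring_1 \<Rightarrow> bool" where
  "central a \<longleftrightarrow> (\<forall>x. a * x = x * a)"

definition order_iso_sets :: "('a \<Rightarrow> 'a \<Rightarrow> bool) \<Rightarrow> 'a set \<Rightarrow> 'a set \<Rightarrow> bool" where
  "order_iso_sets le A B \<longleftrightarrow>
     (\<exists>f. bij_betw f A B \<and> (\<forall>x\<in>A. \<forall>y\<in>A. le x y \<longleftrightarrow> le (f x) (f y)))"

end

theory Submission
  imports Defs
begin

text \<open>Every x \<le> a has the form x = a y* = y* a, so (a] lies in the principal ideal Ra, and the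
defining equations of the natural order between elements c a and d a of Ra are all of the
form p a = q a.  When a and b are central with Ra = Rb, they have the same left annihilator,
so p a = q a holds iff p b = q b; hence c a \<mapsto> c b (right multiplication by v, where b = a v)
is a well-defined order isomorphism from (a] onto (b].\<close>

lemma left_annihilator_eq_of_same_ideal:
  fixes a b :: "'a::ring_1"
  assumes "b = a * v" and "a = b * u"
  shows "r * a = 0 \<longleftrightarrow> r * b = 0"
  using assms by (metis mult.assoc mult_zero_left)

lemma mult_right_eq_iff_of_left_annihilator_eq:
  fixes a b :: "'a::ring_1"
  assumes "\<And>r. r * a = 0 \<longleftrightarrow> r * b = 0"
  shows "p * a = q * a \<longleftrightarrow> p * b = q * b"
  using assms[of "p - q"] by (simp add: left_diff_distrib)

lemma nat_le_mult_central_iff: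
  fixes a b :: "'a::ring_1"
  assumes "central a" and "central b"
    and eq_iff: "\<And>p q. p * a = q * a \<longleftrightarrow> p * b = q * b"
  shows "nat_le st (c * a) (d * a) \<longleftrightarrow> nat_le st (c * b) (d * b)"
proof -
  have "e * a * z = (e * z) * a" "e * b * z = (e * z) * b" for e z
    using assms(1,2) by (simp_all add: central_def mult.assoc)
  then have "(c * a = z * (c * a) \<and> c * a = z * (d * a) \<and> c * a = c * a * st z \<and> c * a = d * a * st z)
      \<longleftrightarrow> (c * b = z * (c * b) \<and> c * b = z * (d * b) \<and> c * b = c * b * st z \<and> c * b = d * b * st z)"
    for z by (simp add: mult.assoc [symmetric] eq_iff)
  then show ?thesis
    unfolding nat_le_def by blast
qed

lemma down_set_central_mult:
  assumes "central a" and "x \<in> down_set st a"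
  obtains c where "x = c * a"
proof -
  obtain y where "x = a * st y"
    using assms(2) unfolding down_set_def nat_le_def by blast
  with assms(1) have "x = st y * a"
    by (simp add: central_def)
  then show thesis by (rule that)
qed

lemma order_iso_down_sets_of_same_ideal:
  fixes a b :: "'a::ring_1"
  assumes central: "central a" "central b"
    and v: "b = a * v" and u: "a = b * u"
  shows "order_iso_sets (nat_le st) (down_set st a) (down_set st b)"
proof -
  have eq_iff: "p * a = q * a \<longleftrightarrow> p * b = q * b" for p q
    by (rule mult_right_eq_iff_of_left_annihilator_eq)
      (rule left_annihilator_eq_of_same_ideal [OF v u])
  note le_iff = nat_le_mult_central_iff [OF central eq_iff]
  have mem_iff: "c * a \<in> down_set st a \<longleftrightarrow> c * b \<in> down_set st b" for c
    using le_iff [where c = c and d = 1] by (simp add: down_set_def)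
  have to_b: "c * a * v = c * b" for c
    unfolding v by (simp add: mult.assoc)
  have to_a: "c * b * u = c * a" for c
    unfolding u by (simp add: mult.assoc)
  have inverse_b: "x * v * u = x" if x_le: "x \<in> down_set st a" for x
  proof -
    obtain c where "x = c * a" using down_set_central_mult [OF central(1) x_le] .
    then show ?thesis by (simp add: to_b to_a)
  qed
  have inverse_a: "y * u * v = y" if y_le: "y \<in> down_set st b" for y
  proof -
    obtain c where "y = c * b" using down_set_central_mult [OF central(2) y_le] .
    then show ?thesis by (simp add: to_b to_a)
  qed
  have maps_to_b: "x * v \<in> down_set st b" if x_le: "x \<in> down_set st a" for x
  proof -
    obtain c where "x = c * a" using down_set_central_mult [OF central(1) x_le] .
    with x_le show ?thesis by (simp add: to_b mem_iff)
  qed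
  have maps_to_a: "y * u \<in> down_set st a" if y_le: "y \<in> down_set st b" for y
  proof -
    obtain c where "y = c * b" using down_set_central_mult [OF central(2) y_le] .
    with y_le show ?thesis by (simp add: to_a mem_iff)
  qed
  have "bij_betw (\<lambda>x. x * v) (down_set st a) (down_set st b)"
    by (rule bij_betw_byWitness [where f' = "\<lambda>y. y * u"])
      (use inverse_b inverse_a maps_to_b maps_to_a in auto)
  moreover have "nat_le st x y \<longleftrightarrow> nat_le st (x * v) (y * v)"
    if x_le: "x \<in> down_set st a" and y_le: "y \<in> down_set st a" for x y
  proof -
    obtain c where "x = c * a" using down_set_central_mult [OF central(1) x_le] .
    moreover obtain d where "y = d * a" using down_set_central_mult [OF central(1) y_le] .
    ultimately show ?thesis by (simp add: to_b le_iff)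
  qed
  ultimately show ?thesis
    unfolding order_iso_sets_def by blast
qed

theorem mainTheorem4:
  fixes st :: "'a::ring_1 \<Rightarrow> 'a" and a b :: 'a
  assumes "star_ring st"
    and "central a" and "central b"
    and "{r * a | r. True} = {r * b | r. True}"
  shows "order_iso_sets (nat_le st) (down_set st a) (down_set st b)"
proof -
  have "a \<in> {r * b | r. True}" "b \<in> {r * a | r. True}"
    using assms(4) by (metis (mono_tags) mem_Collect_eq mult_1)+
  then obtain u v where "a = u * b" "b = v * a"
    by blast
  with assms(2,3) have "b = a * v" "a = b * u"
    unfolding central_def by metis+
  with assms(2,3) show ?thesis
    by (rule order_iso_down_sets_of_same_ideal)
qed

end
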